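(* Let $1 \leq k \leq n-1$ be integers and let $\delta_0$ be the largest real eigenvalue of the linear operator $\hat c_1$ associated with the Grassmannian $\mathrm{Gr}(k,n)$ (defined in the context). Then $\delta_0 \geq \dim \mathrm{Gr}(k,n) + 1 = k(n-k)+1$, with equality if and only if $\mathrm{Gr}(k,n)$ is the projective space $\mathbb{P}^{n-1}$ (i.e. $k=1$ or $k=n-1$).
   Context: $\mathrm{Gr}(k,n)$ is the Grassmannian of $k$-dimensional linear subspaces of $\mathbb{C}^n$. Let $\Lambda$ be the set of partitions $\lambda=(\lambda_1\geq \cdots\geq \lambda_k)$ with $n-k\geq \lambda_1$ and $\lambda_k\geq 0$, and $|\lambda|=\lambda_1+\cdots+\lambda_k$. For $\lambda\in\Lambda$ with $\lambda_1=n-k$ and $\lambda_k>0$ put $\lambda^*=(\lambda_2-1\geq\cdots\geq\lambda_k-1\geq 0)$; otherwise $\lambda^*$ does not exist. The operator $\hat c_1$ (quantum multiplication by the anticanonical class $c_1(\mathrm{Gr}(k,n))=n\sigma_{(1)}$ in small quantum cohomology, specialized at $q=1$) is the linear endomorphism of the real (or complex) vector space with basis $\{\sigma_\lambda\}_{\lambda\in\Lambda}$ given by $\hat c_1(\sigma_\lambda)=n\sigma_{\lambda^*}+n\sum\sigma_\mu$, the sum over all $\mu\in\Lambda$ with $|\mu|=|\lambda|+1$ and $\lambda\subset\mu$, and the term $n\sigma_{\lambda^*}$ omitted if $\lambda^*$ does not exist. $\delta_0$ denotes the largest real eigenvalue of $\hat c_1$ (which equals the maximum modulus of its eigenvalues).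 *)

theory Defs
  imports Complex_Main
begin

text \<open>Partitions in a k x (n-k) box, represented as lists of length k
  (lambda_1 \<ge> ... \<ge> lambda_k, with lambda_1 \<le> n-k).\<close>
definition box_parts :: "nat \<Rightarrow> nat \<Rightarrow> nat list set" where
  "box_parts k n = {l. length l = k \<and> sorted_wrt (\<ge>) l \<and> (\<forall>x\<in>set l. x \<le> n - k)}"

definition star_exists :: "nat \<Rightarrow> nat \<Rightarrow> nat list \<Rightarrow> bool" where
  "star_exists k n l \<longleftrightarrow> l \<noteq> [] \<and> hd l = n - k \<and> last l > 0"

definition star :: "nat list \<Rightarrow> nat list" where
  "star l = map (\<lambda>x. x - 1) (tl l) @ [0]"

text \<open>Coefficient of sigma_mu in c1hat(sigma_lambda).\<close>
definition c1_coeff :: "nat \<Rightarrow> nat \<Rightarrow> nat list \<Rightarrow> nat list \<Rightarrow> real" where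
  "c1_coeff k n mu l =
     (if star_exists k n l \<and> star l = mu then real n else 0)
   + (if sum_list mu = sum_list l + 1 \<and> list_all2 (\<le>) l mu then real n else 0)"

definition c1_hat :: "nat \<Rightarrow> nat \<Rightarrow> (nat list \<Rightarrow> real) \<Rightarrow> (nat list \<Rightarrow> real)" where
  "c1_hat k n v = (\<lambda>mu. \<Sum>l\<in>box_parts k n. c1_coeff k n mu l * v l)"

definition c1_real_eigenvalue :: "nat \<Rightarrow> nat \<Rightarrow> real \<Rightarrow> bool" where
  "c1_real_eigenvalue k n d \<longleftrightarrow>
     (\<exists>v. (\<exists>mu\<in>box_parts k n. v mu \<noteq> 0) \<and>
          (\<forall>mu\<in>box_parts k n. c1_hat k n v mu = d * v mu))"

definition delta0 :: "nat \<Rightarrow> nat \<Rightarrow> real" where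
  "delta0 k n = Max {d. c1_real_eigenvalue k n d}"

end

theory Submission
  imports Defs "HOL-Analysis.Complex_Transcendental" "Jordan_Normal_Form.Spectral_Radius"
begin

text \<open>In coordinates, \<open>(c1_hat v)\<^sub>\<mu> = n (\<Sum> v\<^sub>\<lambda>)\<close>, the sum running over the partitions
  \<open>\<lambda>\<close> obtained from \<open>\<mu>\<close> by removing one box and over the \<open>\<lambda>\<close> with \<open>\<lambda>\<^sup>* = \<mu>\<close>.
  Take \<open>k\<close> numbers \<open>Y\<^sub>a\<close> with \<open>Y\<^sub>a\<^sup>n = (-1)\<^sup>k\<^sup>-\<^sup>1\<close> and let \<open>v\<^sub>\<mu>\<close> be the alternant
  \<open>det (Y\<^sub>a\<^bsup>\<mu>\<^sub>j + k - 1 - j\<^esup>)\<close>, i.e. the Schur polynomial \<open>s\<^sub>\<mu>(Y)\<close> times the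
  Vandermonde determinant. Lowering the \<open>j\<close>-th exponent by one and summing over \<open>j\<close>
  multiplies an alternant by \<open>\<Sum>\<^sub>a 1/Y\<^sub>a\<close>, and the lowered alternants are exactly the
  \<open>v\<^sub>\<lambda>\<close> of the summands above (or vanish), so \<open>v\<close> is an eigenvector with eigenvalue
  \<open>n \<Sum>\<^sub>a 1/Y\<^sub>a\<close>. For \<open>Y\<^sub>a = exp (i (k - 1 - 2a) \<pi> / n)\<close> this is the real number
  \<open>n \<Sum>\<^sub>a cos ((k - 1 - 2a) \<pi> / n) = n sin (k \<pi> / n) / sin (\<pi> / n)\<close>, and the estimate
  \<open>cos x \<ge> 1 - x\<^sup>2/2\<close> together with \<open>\<pi>\<^sup>2 < 12\<close> shows that it is at least
  \<open>k (n - k) + 1\<close>, strictly unless \<open>k\<close> or \<open>n - k\<close> is \<open>1\<close>. For projective space every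
  \<open>\<sigma>\<^sub>\<mu>\<close> has at most one predecessor, so no eigenvalue exceeds \<open>n = k (n - k) + 1\<close>.\<close>

section \<open>Predecessors of a partition under \<open>c1_hat\<close>\<close>

definition remove_box :: "nat list \<Rightarrow> nat \<Rightarrow> nat list" where
  "remove_box mu j = mu[j := mu!j - 1]"

definition removable_rows :: "nat \<Rightarrow> nat list \<Rightarrow> nat set" where
  "removable_rows k mu = {j. j < k \<and> 0 < mu!j \<and> (Suc j < k \<longrightarrow> mu!(Suc j) < mu!j)}"

text \<open>\<open>\<mu> = \<lambda>\<^sup>*\<close> for some \<open>\<lambda>\<close> in the box iff \<open>is_star k n \<mu>\<close>, and then \<open>\<lambda> = unstar k n \<mu>\<close>.\<close>

definition is_star :: "nat \<Rightarrow> nat \<Rightarrow> nat list \<Rightarrow> bool" where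
  "is_star k n mu \<longleftrightarrow> mu!(k-1) = 0 \<and> mu!0 < n - k"

definition unstar :: "nat \<Rightarrow> nat \<Rightarrow> nat list \<Rightarrow> nat list" where
  "unstar k n mu = (n - k) # map Suc (butlast mu)"

lemma box_parts_iff:
  "l \<in> box_parts k n \<longleftrightarrow>
     length l = k \<and> (\<forall>i j. i < j \<longrightarrow> j < k \<longrightarrow> l!j \<le> l!i) \<and> (\<forall>i<k. l!i \<le> n - k)"
  unfolding box_parts_def sorted_wrt_iff_nth_less all_set_conv_all_nth by auto

lemma box_parts_nth_antimono: "l \<in> box_parts k n \<Longrightarrow> i \<le> j \<Longrightarrow> j < k \<Longrightarrow> l!j \<le> l!i"
  unfolding box_parts_iff by (cases "i = j") auto

lemma box_parts_length: "l \<in> box_parts k n \<Longrightarrow> length l = k"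
  unfolding box_parts_def by simp

lemma finite_box_parts: "finite (box_parts k n)"
proof (rule finite_subset)
  show "box_parts k n \<subseteq> {xs. set xs \<subseteq> {..n-k} \<and> length xs = k}"
    unfolding box_parts_def by auto
qed (rule finite_lists_length_eq, simp)

lemma replicate_0_in_box_parts: "replicate k 0 \<in> box_parts k n"
  unfolding box_parts_def by (auto simp: sorted_wrt_iff_nth_less)

lemma sum_list_conv_sum_nth: "sum_list l = (\<Sum>i<length l. l!i)"
  by (simp add: sum_list_sum_nth atLeast0LessThan)

lemma remove_box_nth: "i < length mu \<Longrightarrow> remove_box mu j ! i = (if i = j then mu!j - 1 else mu!i)"
  unfolding remove_box_def by simp

lemma remove_box_in_box_parts:
  assumes mu: "mu \<in> box_parts k n" and j: "j \<in> removable_rows k mu"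
  shows "remove_box mu j \<in> box_parts k n"
  unfolding box_parts_iff
proof (intro conjI allI impI)
  have muk: "length mu = k" using mu by (rule box_parts_length)
  then show "length (remove_box mu j) = k" by (simp add: remove_box_def)
  have l_nth: "remove_box mu j ! i = (if i = j then mu!j - 1 else mu!i)" if "i < k" for i
    using that muk by (simp add: remove_box_nth)
  fix i i' assume ii: "i < i'" "i' < k"
  show "remove_box mu j ! i' \<le> remove_box mu j ! i"
  proof (cases "i = j")
    case True
    have "mu!i' \<le> mu!(Suc j)" using box_parts_nth_antimono[OF mu, of "Suc j" i'] ii True by simp
    moreover have "mu!(Suc j) < mu!j" using j ii True by (simp add: removable_rows_def)
    ultimately show ?thesis using l_nth[of i] l_nth[of i'] ii True by simp
  next
    case False
    then show ?thesis using l_nth[of i] l_nth[of i'] ii box_parts_nth_antimono[OF mu, of i i']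
      by (cases "i' = j") auto
  qed
next
  fix i assume i: "i < k"
  then have "mu!i \<le> n - k" using mu unfolding box_parts_iff by blast
  then show "remove_box mu j ! i \<le> n - k" using i box_parts_length[OF mu]
    by (cases "i = j") (simp_all add: remove_box_nth)
qed

lemma remove_box_predecessor:
  assumes mu: "mu \<in> box_parts k n" and j: "j \<in> removable_rows k mu"
  shows "sum_list mu = sum_list (remove_box mu j) + 1" and "list_all2 (\<le>) (remove_box mu j) mu"
proof -
  let ?l = "remove_box mu j"
  have muk: "length mu = k" and lk: "length ?l = k"
    using mu by (simp_all add: box_parts_length remove_box_def)
  have l_nth: "mu!i = ?l!i + (if i = j then 1 else 0)" if "i < k" for i
    using that j muk by (simp add: remove_box_nth removable_rows_def)
  have "sum_list mu = (\<Sum>i<k. ?l!i + (if i = j then 1 else 0))"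
    unfolding sum_list_conv_sum_nth muk by (intro sum.cong refl) (simp add: l_nth)
  also have "\<dots> = sum_list ?l + 1"
    unfolding sum_list_conv_sum_nth lk sum.distrib using j by (simp add: removable_rows_def)
  finally show "sum_list mu = sum_list ?l + 1" .
  show "list_all2 (\<le>) ?l mu"
    using lk muk l_nth by (auto simp: list_all2_conv_all_nth)
qed

lemma predecessor_is_remove_box:
  assumes l: "l \<in> box_parts k n" and mu: "mu \<in> box_parts k n"
    and sum: "sum_list mu = sum_list l + 1" and le: "list_all2 (\<le>) l mu"
  shows "\<exists>j\<in>removable_rows k mu. l = remove_box mu j"
proof -
  have lk: "length l = k" and muk: "length mu = k" using l mu by (simp_all add: box_parts_length)
  have le_nth: "\<And>i. i < k \<Longrightarrow> l!i \<le> mu!i" using le lk by (simp add: list_all2_conv_all_nth)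
  have "(\<Sum>i<k. mu!i - l!i) = (\<Sum>i<k. mu!i) - (\<Sum>i<k. l!i)"
    by (rule sum_subtractf_nat) (simp add: le_nth)
  also have "\<dots> = 1" using sum unfolding sum_list_conv_sum_nth lk muk by simp
  finally have "\<exists>j\<in>{..<k}. mu!j - l!j = 1 \<and> (\<forall>i\<in>{..<k}. j \<noteq> i \<longrightarrow> mu!i - l!i = 0)"
    by (simp only: sum_eq_1_iff[OF finite_lessThan])
  then obtain j where jk: "j < k" and dj: "mu!j - l!j = 1"
    and di: "\<And>i. i < k \<Longrightarrow> j \<noteq> i \<Longrightarrow> mu!i - l!i = 0"
    by blast
  have l_nth: "l!i = (if i = j then mu!j - 1 else mu!i)" if i: "i < k" for i
    using le_nth[OF i] dj di[OF i] by (cases "i = j") auto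
  have l_eq: "l = remove_box mu j"
    by (rule nth_equalityI) (simp_all add: lk muk remove_box_def l_nth)
  have "Suc j < k \<longrightarrow> mu!(Suc j) < mu!j"
  proof
    assume sj: "Suc j < k"
    have "mu!(Suc j) = l!(Suc j)" using l_nth sj by simp
    also have "\<dots> \<le> l!j" using box_parts_nth_antimono[OF l, of j "Suc j"] sj by simp
    also have "\<dots> < mu!j" using dj le_nth jk by linarith
    finally show "mu!(Suc j) < mu!j" .
  qed
  with jk dj have "j \<in> removable_rows k mu"
    unfolding removable_rows_def by simp
  with l_eq show ?thesis by blast
qed

lemma box_parts_predecessors:
  assumes "mu \<in> box_parts k n"
  shows "{l \<in> box_parts k n. sum_list mu = sum_list l + 1 \<and> list_all2 (\<le>) l mu}
           = remove_box mu ` removable_rows k mu"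
  using assms remove_box_in_box_parts remove_box_predecessor predecessor_is_remove_box by blast

lemma inj_on_remove_box:
  assumes "length mu = k"
  shows "inj_on (remove_box mu) (removable_rows k mu)"
proof (rule inj_onI, rule ccontr)
  fix i j assume i: "i \<in> removable_rows k mu" and eq: "remove_box mu i = remove_box mu j"
    and ne: "i \<noteq> j"
  have pos: "0 < mu!i" using i by (simp add: removable_rows_def)
  have "remove_box mu i ! i = mu!i - 1" and "remove_box mu j ! i = mu!i"
    using i ne assms by (auto simp: removable_rows_def remove_box_nth)
  with eq have "mu!i - 1 = mu!i" by simp
  with pos show False by linarith
qed

lemma unstar_nth:
  "length mu = k \<Longrightarrow> i < k \<Longrightarrow> unstar k n mu ! i = (if i = 0 then n - k else Suc (mu!(i-1)))"
  unfolding unstar_def by (auto simp: nth_Cons' nth_butlast)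

lemma length_unstar: "length mu = k \<Longrightarrow> 0 < k \<Longrightarrow> length (unstar k n mu) = k"
  unfolding unstar_def by simp

lemma star_preimage_eq_unstar:
  assumes l: "l \<in> box_parts k n" and star: "star_exists k n l" and k: "0 < k" "k < n"
  shows "is_star k n (star l)" and "l = unstar k n (star l)"
proof -
  let ?mu = "star l"
  have lk: "length l = k" using l by (rule box_parts_length)
  have l0: "l!0 = n - k" and last_pos: "0 < l!(k-1)"
    using star lk k by (auto simp: star_exists_def hd_conv_nth last_conv_nth)
  have l_pos: "0 < l!i" if "i < k" for i
    using box_parts_nth_antimono[OF l, of i "k-1"] last_pos that by fastforce
  have mu_nth: "?mu!i = (if i < k - 1 then l!(Suc i) - 1 else 0)" if "i < k" for i
    using that lk unfolding star_def by (auto simp: nth_append nth_tl)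
  have "?mu!0 < n - k"
  proof (cases "k = 1")
    case False
    then have "l!1 \<le> l!0" and "0 < l!1" using box_parts_nth_antimono[OF l, of 0 1] l_pos k by auto
    with False k show ?thesis using mu_nth[of 0] l0 by simp
  qed (use mu_nth k in simp)
  then show "is_star k n ?mu" unfolding is_star_def using mu_nth[of "k-1"] k by simp
  show "l = unstar k n ?mu"
  proof (rule nth_equalityI)
    have "length ?mu = k" using lk k unfolding star_def by simp
    then show "length l = length (unstar k n ?mu)" using lk k by (simp add: length_unstar)
    fix i assume "i < length l"
    then show "l!i = unstar k n ?mu ! i"
      using unstar_nth[OF \<open>length ?mu = k\<close>] mu_nth[of "i-1"] l0 l_pos lk by auto
  qed
qed

lemma unstar_in_box_parts:
  assumes mu: "mu \<in> box_parts k n" and star: "is_star k n mu" and k: "0 < k" "k < n"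
  shows "unstar k n mu \<in> box_parts k n" and "star_exists k n (unstar k n mu)"
    and "star (unstar k n mu) = mu"
proof -
  let ?l = "unstar k n mu"
  have muk: "length mu = k" using mu by (rule box_parts_length)
  have last0: "mu!(k-1) = 0" and first: "mu!0 < n - k" using star unfolding is_star_def by auto
  have l_nth: "?l!i = (if i = 0 then n - k else Suc (mu!(i-1)))" if "i < k" for i
    using unstar_nth[OF muk that] .
  have l_le: "?l!i \<le> n - k" if "i < k" for i
  proof -
    have "i - 1 < k" using that by simp
    then show ?thesis using l_nth[OF that] box_parts_nth_antimono[OF mu, of 0 "i-1"] first by auto
  qed
  show "?l \<in> box_parts k n" unfolding box_parts_iff
  proof (intro conjI allI impI)
    show "length ?l = k" using muk k by (simp add: length_unstar)
    fix i j assume ij: "i < j" "j < k"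
    show "?l!j \<le> ?l!i"
    proof (cases "i = 0")
      case True then show ?thesis using l_le[OF ij(2)] l_nth ij by auto
    next
      case False then show ?thesis
        using box_parts_nth_antimono[OF mu, of "i-1" "j-1"] l_nth ij by auto
    qed
  qed (rule l_le)
  have "?l \<noteq> []" by (simp add: unstar_def)
  then have "last ?l = ?l!(k-1)" using muk k by (simp add: last_conv_nth length_unstar)
  then show "star_exists k n ?l" using l_nth[of "k-1"] k unfolding star_exists_def
    by (simp add: unstar_def)
  have "last mu = 0" using last0 muk k by (subst last_conv_nth) auto
  then have "butlast mu @ [0] = mu"
    using muk k by (metis append_butlast_last_id list.size(3) less_irrefl)
  then show "star ?l = mu" unfolding star_def unstar_def by (simp add: comp_def)
qed

lemma star_preimages:
  assumes mu: "mu \<in> box_parts k n" and k: "0 < k" "k < n"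
  shows "{l \<in> box_parts k n. star_exists k n l \<and> star l = mu}
           = (if is_star k n mu then {unstar k n mu} else {})"
  using star_preimage_eq_unstar[OF _ _ k] unstar_in_box_parts[OF mu _ k] by auto

lemma c1_hat_row:
  fixes w :: "nat list \<Rightarrow> 'a::real_algebra_1"
  assumes mu: "mu \<in> box_parts k n" and k: "0 < k" "k < n"
  shows "(\<Sum>l\<in>box_parts k n. of_real (c1_coeff k n mu l) * w l)
     = of_nat n * ((\<Sum>j\<in>removable_rows k mu. w (remove_box mu j))
                   + (if is_star k n mu then w (unstar k n mu) else 0))"
proof -
  let ?S = "box_parts k n"
  let ?P1 = "\<lambda>l. star_exists k n l \<and> star l = mu"
  let ?P2 = "\<lambda>l. sum_list mu = sum_list l + 1 \<and> list_all2 (\<le>) l mu"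
  have "(\<Sum>l\<in>?S. of_real (c1_coeff k n mu l) * w l)
      = (\<Sum>l\<in>{l\<in>?S. ?P1 l}. of_nat n * w l) + (\<Sum>l\<in>{l\<in>?S. ?P2 l}. of_nat n * w l)"
    unfolding sum.inter_filter[OF finite_box_parts] sum.distrib[symmetric] c1_coeff_def
    by (intro sum.cong refl) (auto simp: distrib_right)
  also have "(\<Sum>l\<in>{l\<in>?S. ?P1 l}. of_nat n * w l) = of_nat n * (if is_star k n mu then w (unstar k n mu) else 0)"
    unfolding star_preimages[OF mu k] by simp
  also have "(\<Sum>l\<in>{l\<in>?S. ?P2 l}. of_nat n * w l) = (\<Sum>j\<in>removable_rows k mu. of_nat n * w (remove_box mu j))"
    unfolding box_parts_predecessors[OF mu]
    by (rule sum.reindex[OF inj_on_remove_box[OF box_parts_length[OF mu]], unfolded comp_def])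
  finally show ?thesis by (simp add: sum_distrib_left distrib_left add.commute)
qed

section \<open>Alternants\<close>

definition alternant :: "nat \<Rightarrow> (nat \<Rightarrow> 'a::field) \<Rightarrow> (nat \<Rightarrow> int) \<Rightarrow> 'a" where
  "alternant k Y f = det (mat k k (\<lambda>(a, j). Y a powi f j))"

lemma alternant_leibniz:
  "alternant k Y f = (\<Sum>p | p permutes {0..<k}. of_int (sign p) * (\<Prod>i = 0..<k. Y i powi f (p i)))"
  unfolding alternant_def by (subst det_def'[of _ k]) auto

lemma alternant_cong: "(\<And>j. j < k \<Longrightarrow> f j = g j) \<Longrightarrow> alternant k Y f = alternant k Y g"
  unfolding alternant_def by (intro arg_cong[where f = det] eq_matI) auto

lemma alternant_eq_0_if_equal_exponents:
  assumes "i \<noteq> j" "i < k" "j < k" "f i = f j"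
  shows "alternant k Y f = 0"
  unfolding alternant_def
  by (rule det_identical_columns[of _ k i j]) (use assms in \<open>auto intro!: eq_vecI\<close>)

lemma prod_powi_lower_exponent:
  fixes Y :: "nat \<Rightarrow> 'a::field"
  assumes p: "p permutes {0..<k}" and j: "j < k" and Y: "Y (Hilbert_Choice.inv p j) \<noteq> 0"
  shows "(\<Prod>i = 0..<k. Y i powi (f(j := f j - 1)) (p i))
           = inverse (Y (Hilbert_Choice.inv p j)) * (\<Prod>i = 0..<k. Y i powi f (p i))"
proof -
  let ?i = "Hilbert_Choice.inv p j"
  have i: "?i \<in> {0..<k}" using permutes_in_image[OF permutes_inv[OF p]] j by simp
  have p_eq: "p i = j \<longleftrightarrow> i = ?i" for i using permutes_inverses[OF p] by metis
  have "Y ?i powi (f j - 1) = inverse (Y ?i) * Y ?i powi f j"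
    using Y by (simp add: power_int_diff field_simps)
  then show ?thesis
    using p_eq by (simp add: prod.remove[OF finite_atLeastLessThan i] permutes_inverses(1)[OF p])
qed

lemma sum_alternant_lower_exponent:
  fixes Y :: "nat \<Rightarrow> 'a::field"
  assumes Y: "\<And>a. a < k \<Longrightarrow> Y a \<noteq> 0"
  shows "(\<Sum>j<k. alternant k Y (f(j := f j - 1))) = (\<Sum>a<k. inverse (Y a)) * alternant k Y f"
proof -
  have perm_term: "(\<Sum>j<k. \<Prod>i = 0..<k. Y i powi (f(j := f j - 1)) (p i))
      = (\<Sum>a<k. inverse (Y a)) * (\<Prod>i = 0..<k. Y i powi f (p i))" if p: "p permutes {0..<k}" for p
  proof -
    have inv_p: "Hilbert_Choice.inv p j < k" if "j < k" for j
      using permutes_in_image[OF permutes_inv[OF p]] that by simp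
    have "(\<Sum>j<k. \<Prod>i = 0..<k. Y i powi (f(j := f j - 1)) (p i))
        = (\<Sum>j<k. inverse (Y (Hilbert_Choice.inv p j)) * (\<Prod>i = 0..<k. Y i powi f (p i)))"
      by (intro sum.cong refl prod_powi_lower_exponent[OF p]) (simp_all add: Y inv_p)
    also have "\<dots> = (\<Sum>j\<in>{0..<k}. inverse (Y (Hilbert_Choice.inv p j))) * (\<Prod>i = 0..<k. Y i powi f (p i))"
      by (simp add: sum_distrib_right atLeast0LessThan)
    also have "(\<Sum>j\<in>{0..<k}. inverse (Y (Hilbert_Choice.inv p j))) = (\<Sum>a<k. inverse (Y a))"
      using sum.permute[OF permutes_inv[OF p], of "\<lambda>a. inverse (Y a)"]
      by (simp add: comp_def atLeast0LessThan)
    finally show ?thesis .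
  qed
  have "(\<Sum>j<k. alternant k Y (f(j := f j - 1)))
      = (\<Sum>p | p permutes {0..<k}. of_int (sign p) * (\<Sum>j<k. \<Prod>i = 0..<k. Y i powi (f(j := f j - 1)) (p i)))"
    unfolding alternant_leibniz sum_distrib_left by (rule sum.swap)
  also have "\<dots> = (\<Sum>p | p permutes {0..<k}.
                      of_int (sign p) * ((\<Sum>a<k. inverse (Y a)) * (\<Prod>i = 0..<k. Y i powi f (p i))))"
    by (intro sum.cong refl) (simp only: mem_Collect_eq perm_term)
  also have "\<dots> = (\<Sum>a<k. inverse (Y a)) * alternant k Y f"
    unfolding alternant_leibniz sum_distrib_left by (simp add: ac_simps)
  finally show ?thesis .
qed

lemma det_mat_scale_cols:
  fixes g :: "nat \<Rightarrow> 'a::comm_ring_1"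
  shows "det (mat k k (\<lambda>(a, j). g j * B a j)) = (\<Prod>j<k. g j) * det (mat k k (\<lambda>(a, j). B a j))"
proof -
  have "of_int (sign p) * (\<Prod>i = 0..<k. g (p i) * B i (p i))
      = (\<Prod>j<k. g j) * (of_int (sign p) * (\<Prod>i = 0..<k. B i (p i)))"
    if p: "p permutes {0..<k}" for p
    using prod.permute[OF p, of g] by (simp add: prod.distrib comp_def atLeast0LessThan ac_simps)
  then have "(\<Sum>p | p permutes {0..<k}. of_int (sign p) * (\<Prod>i = 0..<k. g (p i) * B i (p i)))
      = (\<Prod>j<k. g j) * (\<Sum>p | p permutes {0..<k}. of_int (sign p) * (\<Prod>i = 0..<k. B i (p i)))"
    by (simp add: sum_distrib_left)
  then show ?thesis by (subst (1 2) det_def'[of _ k]) auto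
qed

lemma alternant_rotate:
  assumes "0 < k"
  shows "alternant k Y f = (-1)^(k-1) * alternant k Y (\<lambda>j. if j = 0 then f (k-1) else f (j-1))"
proof -
  have kk: "k = 1 + (k - 1)" using assms by simp
  have "mat k k (\<lambda>(a, j). Y a powi f j) \<in> carrier_mat (1 + (k-1)) (1 + (k-1))" using kk by simp
  from det_swap_cols[OF this] have "alternant k Y f = (-1)^(k-1) *
      det (mat (1 + (k-1)) (1 + (k-1)) (\<lambda>(i, j). mat k k (\<lambda>(a, j). Y a powi f j) $$ (i, if j < 1 then j + (k-1) else j - 1)))"
    unfolding alternant_def by simp
  also have "mat (1 + (k-1)) (1 + (k-1)) (\<lambda>(i, j). mat k k (\<lambda>(a, j). Y a powi f j) $$ (i, if j < 1 then j + (k-1) else j - 1))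
      = mat k k (\<lambda>(a, j). Y a powi (\<lambda>j. if j = 0 then f (k-1) else f (j-1)) j)"
    using kk by (intro eq_matI) auto
  finally show ?thesis unfolding alternant_def .
qed

text \<open>Since \<open>Y\<^sup>-\<^sup>1 = (-1)\<^sup>k\<^sup>-\<^sup>1 Y\<^sup>n\<^sup>-\<^sup>1\<close>, the last column becomes \<open>(-1)\<^sup>k\<^sup>-\<^sup>1\<close> times the column
  of exponent \<open>n - 1\<close>; moving that column to the front costs the same sign again.\<close>

lemma alternant_wrap_exponent:
  fixes Y :: "nat \<Rightarrow> 'a::field"
  assumes k: "0 < k" "0 < n" and roots: "\<And>a. a < k \<Longrightarrow> Y a ^ n = (-1)^(k-1)"
    and last: "f (k-1) = -1"
  shows "alternant k Y f = alternant k Y (\<lambda>j. if j = 0 then int (n-1) else f (j-1))"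
proof -
  define c :: 'a where "c = (-1)^(k-1)"
  define h where "h = f(k-1 := int (n-1))"
  have cc: "c * c = 1" unfolding c_def by (simp add: power_mult_distrib[symmetric])
  have inv: "Y a powi (-1) = c * Y a ^ (n-1)" if "a < k" for a
  proof -
    have "Y a * Y a ^ (n-1) = c" using roots[OF that] k unfolding c_def by (cases n) simp_all
    then have "Y a * (c * Y a ^ (n-1)) = c * c" by (simp only: mult.left_commute)
    then show ?thesis using power_int_minus[of "Y a" 1] cc by (simp add: inverse_unique)
  qed
  have "alternant k Y f = det (mat k k (\<lambda>(a, j). (if j = k-1 then c else 1) * Y a powi h j))"
    unfolding alternant_def
  proof (intro arg_cong[where f = det] eq_matI)
    fix a j assume "a < dim_row (mat k k (\<lambda>(a, j). (if j = k-1 then c else 1) * Y a powi h j))"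
      and "j < dim_col (mat k k (\<lambda>(a, j). (if j = k-1 then c else 1) * Y a powi h j))"
    then have "a < k" "j < k" by simp_all
    then show "mat k k (\<lambda>(a, j). Y a powi f j) $$ (a, j)
        = mat k k (\<lambda>(a, j). (if j = k-1 then c else 1) * Y a powi h j) $$ (a, j)"
      using last inv by (simp add: h_def)
  qed simp_all
  also have "\<dots> = (\<Prod>j<k. if j = k-1 then c else 1) * alternant k Y h"
    unfolding alternant_def by (rule det_mat_scale_cols)
  also have "(\<Prod>j<k. if j = k-1 then c else 1) = c" using k by (simp add: prod.delta)
  also have "alternant k Y h = c * alternant k Y (\<lambda>j. if j = 0 then h (k-1) else h (j-1))"
    unfolding c_def by (rule alternant_rotate[OF k(1)])
  also have "alternant k Y (\<lambda>j. if j = 0 then h (k-1) else h (j-1))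
      = alternant k Y (\<lambda>j. if j = 0 then int (n-1) else f (j-1))"
    unfolding h_def by (rule alternant_cong) auto
  finally show ?thesis by (simp only: mult.assoc[symmetric] cc mult_1_left)
qed

lemma det_vandermonde_nonzero:
  fixes Y :: "nat \<Rightarrow> 'a::field"
  assumes inj: "inj_on Y {..<k}"
  shows "det (mat k k (\<lambda>(a, j). Y a ^ (k-1-j))) \<noteq> 0"
proof
  let ?M = "mat k k (\<lambda>(a, j). Y a ^ (k-1-j))"
  assume "det ?M = 0"
  then obtain v where v: "v \<in> carrier_vec k" "v \<noteq> 0\<^sub>v k" "?M *\<^sub>v v = 0\<^sub>v k"
    using det_0_iff_vec_prod_zero_field[of ?M k] by auto
  define p where "p = (\<Sum>j<k. monom (v $ j) (k-1-j))"
  have root: "poly p (Y a) = 0" if a: "a < k" for a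
  proof -
    have "(?M *\<^sub>v v) $ a = 0" using v(3) a by simp
    then show ?thesis
      using a v(1) unfolding p_def
      by (simp add: scalar_prod_def poly_sum poly_monom atLeast0LessThan mult.commute)
  qed
  obtain j where j: "j < k" "v $ j \<noteq> 0" using v(1,2) by (metis eq_vecI carrier_vecD index_zero_vec(1,2))
  have "coeff p (k-1-j) = (\<Sum>j'<k. if j' = j then v $ j' else 0)"
    unfolding p_def coeff_sum using j by (intro sum.cong refl) (auto simp: coeff_monom)
  with j have p0: "p \<noteq> 0" by auto
  have deg: "degree p \<le> k - 1" unfolding p_def
    by (rule degree_sum_le) (auto intro: order.trans[OF degree_monom_le])
  have "k = card (Y ` {..<k})" using card_image[OF inj] by simp
  also have "\<dots> \<le> card {x. poly p x = 0}"
    using root by (intro card_mono poly_roots_finite p0) auto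
  also have "\<dots> \<le> degree p" by (rule poly_roots_degree[OF p0])
  finally show False using deg j by simp
qed

section \<open>Schur alternants at roots of \<open>(-1)\<^sup>k\<^sup>-\<^sup>1\<close> are eigenvectors\<close>

definition shifted_exponents :: "nat \<Rightarrow> nat list \<Rightarrow> nat \<Rightarrow> int" where
  "shifted_exponents k mu j = int (mu!j) + int (k - 1 - j)"

definition schur_alternant :: "nat \<Rightarrow> (nat \<Rightarrow> 'a::field) \<Rightarrow> nat list \<Rightarrow> 'a" where
  "schur_alternant k Y mu = alternant k Y (shifted_exponents k mu)"

lemma alternant_lower_removable:
  assumes "length mu = k" and j: "j \<in> removable_rows k mu"
  shows "alternant k Y ((shifted_exponents k mu)(j := shifted_exponents k mu j - 1))
           = schur_alternant k Y (remove_box mu j)"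
  unfolding schur_alternant_def
  by (rule alternant_cong) (use assms in \<open>auto simp: shifted_exponents_def remove_box_nth
      removable_rows_def of_nat_diff\<close>)

lemma alternant_lower_blocked:
  assumes mu: "mu \<in> box_parts k n" and j: "j \<notin> removable_rows k mu" "Suc j < k"
  shows "alternant k Y ((shifted_exponents k mu)(j := shifted_exponents k mu j - 1)) = 0"
proof (rule alternant_eq_0_if_equal_exponents[of j "Suc j"])
  have "mu!(Suc j) \<le> mu!j" using box_parts_nth_antimono[OF mu, of j "Suc j"] j by simp
  moreover have "mu!j = 0 \<or> mu!(Suc j) = mu!j" using j calculation by (auto simp: removable_rows_def)
  moreover have "int (k - 1 - j) = int (k - 1 - Suc j) + 1" using j by simp
  ultimately show "((shifted_exponents k mu)(j := shifted_exponents k mu j - 1)) j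
      = ((shifted_exponents k mu)(j := shifted_exponents k mu j - 1)) (Suc j)"
    unfolding shifted_exponents_def by auto
qed (use j in auto)

lemma alternant_lower_last:
  fixes Y :: "nat \<Rightarrow> 'a::field"
  assumes mu: "mu \<in> box_parts k n" and last0: "mu!(k-1) = 0" and k: "0 < k" "k < n"
    and roots: "\<And>a. a < k \<Longrightarrow> Y a ^ n = (-1)^(k-1)"
  shows "alternant k Y ((shifted_exponents k mu)(k-1 := shifted_exponents k mu (k-1) - 1))
           = (if is_star k n mu then schur_alternant k Y (unstar k n mu) else 0)"
proof -
  let ?e = "shifted_exponents k mu"
  define rotated where "rotated = (\<lambda>j. if j = 0 then int (n-1) else ?e (j-1))"
  have "alternant k Y (?e(k-1 := ?e (k-1) - 1))
      = alternant k Y (\<lambda>j. if j = 0 then int (n-1) else (?e(k-1 := ?e (k-1) - 1)) (j-1))"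
    by (rule alternant_wrap_exponent[OF _ _ roots]) (use k last0 in \<open>simp_all add: shifted_exponents_def\<close>)
  also have "\<dots> = alternant k Y rotated"
    unfolding rotated_def by (rule alternant_cong) auto
  finally have lowered: "alternant k Y (?e(k-1 := ?e (k-1) - 1)) = alternant k Y rotated" .
  show ?thesis
  proof (cases "is_star k n mu")
    case True
    have "alternant k Y rotated = schur_alternant k Y (unstar k n mu)"
      unfolding schur_alternant_def using box_parts_length[OF mu] k
      by (intro alternant_cong) (auto simp: rotated_def shifted_exponents_def unstar_nth of_nat_diff)
    with True lowered show ?thesis by simp
  next
    case False
    have "mu!0 \<le> n - k" using mu k unfolding box_parts_iff by simp
    with False last0 have "mu!0 = n - k" unfolding is_star_def by simp
    with last0 k have "k \<noteq> 1" by auto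
    have "alternant k Y rotated = 0"
      by (rule alternant_eq_0_if_equal_exponents[of 0 1])
        (use k \<open>k \<noteq> 1\<close> \<open>mu!0 = n - k\<close> in \<open>auto simp: rotated_def shifted_exponents_def\<close>)
    with False lowered show ?thesis by simp
  qed
qed

lemma sum_alternant_lower_shifted_exponent:
  fixes Y :: "nat \<Rightarrow> 'a::field"
  assumes mu: "mu \<in> box_parts k n" and k: "0 < k" "k < n"
    and roots: "\<And>a. a < k \<Longrightarrow> Y a ^ n = (-1)^(k-1)"
  shows "(\<Sum>j<k. alternant k Y ((shifted_exponents k mu)(j := shifted_exponents k mu j - 1)))
       = (\<Sum>j\<in>removable_rows k mu. schur_alternant k Y (remove_box mu j))
         + (if is_star k n mu then schur_alternant k Y (unstar k n mu) else 0)"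
proof -
  let ?A = "\<lambda>j. alternant k Y ((shifted_exponents k mu)(j := shifted_exponents k mu j - 1))"
  have sub: "removable_rows k mu \<subseteq> {..<k}" unfolding removable_rows_def by auto
  have "(\<Sum>j<k. ?A j) = (\<Sum>j\<in>{..<k} - removable_rows k mu. ?A j) + (\<Sum>j\<in>removable_rows k mu. ?A j)"
    by (rule sum.subset_diff[OF sub finite_lessThan])
  also have "(\<Sum>j\<in>removable_rows k mu. ?A j) = (\<Sum>j\<in>removable_rows k mu. schur_alternant k Y (remove_box mu j))"
    by (intro sum.cong refl alternant_lower_removable box_parts_length[OF mu])
  also have "(\<Sum>j\<in>{..<k} - removable_rows k mu. ?A j) = (if is_star k n mu then schur_alternant k Y (unstar k n mu) else 0)"
  proof (cases "mu!(k-1) = 0")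
    case True
    have last: "k - 1 \<in> {..<k} - removable_rows k mu" using True k by (auto simp: removable_rows_def)
    have "(\<Sum>j\<in>{..<k} - removable_rows k mu - {k-1}. ?A j) = 0"
      by (rule sum.neutral) (auto intro!: alternant_lower_blocked[OF mu])
    then show ?thesis
      using alternant_lower_last[OF mu True k roots] by (simp add: sum.remove[OF _ last])
  next
    case False
    then have "\<not> is_star k n mu" unfolding is_star_def by simp
    moreover have "Suc j < k" if "j \<in> {..<k} - removable_rows k mu" for j
      using that False k by (cases "j = k - 1") (auto simp: removable_rows_def)
    ultimately show ?thesis by (auto intro!: sum.neutral alternant_lower_blocked[OF mu])
  qed
  finally show ?thesis by (simp only: add.commute)
qed

theorem c1_hat_schur_alternant:
  fixes Y :: "nat \<Rightarrow> 'a::{field, real_algebra_1}"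
  assumes mu: "mu \<in> box_parts k n" and k: "0 < k" "k < n"
    and roots: "\<And>a. a < k \<Longrightarrow> Y a ^ n = (-1)^(k-1)"
  shows "(\<Sum>l\<in>box_parts k n. of_real (c1_coeff k n mu l) * schur_alternant k Y l)
       = of_nat n * (\<Sum>a<k. inverse (Y a)) * schur_alternant k Y mu"
proof -
  have "Y a \<noteq> 0" if "a < k" for a
  proof
    assume "Y a = 0"
    with roots[OF that] k have "(-1::'a)^(k-1) = 0" by (simp add: power_0_left)
    then show False by simp
  qed
  then have "(\<Sum>j<k. alternant k Y ((shifted_exponents k mu)(j := shifted_exponents k mu j - 1)))
      = (\<Sum>a<k. inverse (Y a)) * schur_alternant k Y mu"
    unfolding schur_alternant_def by (rule sum_alternant_lower_exponent)
  moreover have "(\<Sum>l\<in>box_parts k n. of_real (c1_coeff k n mu l) * schur_alternant k Y l)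
      = of_nat n * (\<Sum>j<k. alternant k Y ((shifted_exponents k mu)(j := shifted_exponents k mu j - 1)))"
    using c1_hat_row[OF mu k, of "schur_alternant k Y"] sum_alternant_lower_shifted_exponent[OF mu k roots]
    by simp
  ultimately show ?thesis by (simp only: mult.assoc)
qed

section \<open>The eigenvalue \<open>n \<Sum>\<^sub>a cos ((k - 1 - 2a) \<pi> / n)\<close>\<close>

lemma c1_real_eigenvalue_if_complex_eigenvector:
  assumes mu0: "mu0 \<in> box_parts k n" "w mu0 \<noteq> 0"
    and eigen: "\<And>mu. mu \<in> box_parts k n \<Longrightarrow>
      (\<Sum>l\<in>box_parts k n. of_real (c1_coeff k n mu l) * w l) = complex_of_real d * w mu"
  shows "c1_real_eigenvalue k n d"
proof -
  have "c1_hat k n (\<lambda>l. f (w l)) mu = d * f (w mu)"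
    if "mu \<in> box_parts k n" and f: "f = Re \<or> f = Im" for mu f
    using arg_cong[OF eigen[OF that(1)], of f] f by (auto simp: c1_hat_def Re_sum Im_sum)
  moreover have "Re (w mu0) \<noteq> 0 \<or> Im (w mu0) \<noteq> 0" using mu0(2) complex_eq_iff by auto
  ultimately show ?thesis
    unfolding c1_real_eigenvalue_def using mu0(1) by metis
qed

lemma schur_alternant_replicate_0:
  "schur_alternant k Y (replicate k 0) = det (mat k k (\<lambda>(a, j). Y a ^ (k-1-j)))"
  unfolding schur_alternant_def alternant_def
  by (intro arg_cong[where f = det] eq_matI) (simp_all add: shifted_exponents_def del: of_nat_diff)

definition theta :: "nat \<Rightarrow> nat \<Rightarrow> nat \<Rightarrow> real" where
  "theta k n a = (real k - 1 - 2 * real a) * (pi / real n)"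

definition balanced_roots :: "nat \<Rightarrow> nat \<Rightarrow> nat \<Rightarrow> complex" where
  "balanced_roots k n a = cis (theta k n a)"

definition schur_eigenvalue :: "nat \<Rightarrow> nat \<Rightarrow> real" where
  "schur_eigenvalue k n = real n * (\<Sum>a<k. cos (theta k n a))"

lemma cis_real_mult_pi: "cis (real m * pi) = (-1)^m"
  by (simp add: complex_eq_iff cos_npi sin_npi)

lemma balanced_roots_power:
  assumes "0 < n" "0 < k"
  shows "balanced_roots k n a ^ n = (-1)^(k-1)"
proof -
  have "real n * theta k n a = real (k-1) * pi - real (2*a) * pi"
    unfolding theta_def using assms by (simp add: of_nat_diff field_simps)
  then have "balanced_roots k n a ^ n = cis (real (k-1) * pi) / cis (real (2*a) * pi)"
    unfolding balanced_roots_def Complex.DeMoivre by (simp add: cis_divide)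
  then show ?thesis by (simp only: cis_real_mult_pi) simp
qed

lemma inj_on_balanced_roots:
  assumes "k \<le> n"
  shows "inj_on (balanced_roots k n) {..<k}"
proof (rule inj_onI)
  fix a b assume a: "a \<in> {..<k}" and b: "b \<in> {..<k}" and eq: "balanced_roots k n a = balanced_roots k n b"
  have n: "real n > 0" using a assms by simp
  have "cis (theta k n a - theta k n b) = 1"
    using eq unfolding balanced_roots_def by (simp add: cis_divide[symmetric])
  then have "cos (theta k n a - theta k n b) = 1" by (simp add: complex_eq_iff)
  then obtain m :: int where "theta k n a - theta k n b = real_of_int m * 2 * pi"
    using cos_one_2pi_int by blast
  moreover have "theta k n a - theta k n b = (real b - real a) * 2 * pi / real n"
    unfolding theta_def using n by (simp add: field_simps)
  ultimately have "(real b - real a) * (2 * pi) = (real_of_int m * real n) * (2 * pi)"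
    using n by (simp add: field_simps)
  then have m: "real b - real a = real_of_int m * real n" by simp
  have "\<bar>real b - real a\<bar> < real n" using a b assms by auto
  then have "\<bar>real_of_int m\<bar> * real n < 1 * real n" unfolding m by (simp add: abs_mult)
  then have "m = 0" using n by (simp only: mult_less_cancel_right) linarith
  then show "a = b" using m by simp
qed

lemma sum_inverse_balanced_roots:
  "(\<Sum>a<k. inverse (balanced_roots k n a)) = complex_of_real (\<Sum>a<k. cos (theta k n a))"
proof -
  have "theta k n (k - Suc a) = - theta k n a" if "a < k" for a
    using that unfolding theta_def by (simp add: of_nat_diff algebra_simps)
  then have "(\<Sum>a<k. sin (theta k n a)) = - (\<Sum>a<k. sin (theta k n a))"
    by (subst sum.nat_diff_reindex[symmetric]) (simp add: sum_negf[symmetric])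
  then have "(\<Sum>a<k. sin (theta k n a)) = 0" by simp
  then show ?thesis
    unfolding balanced_roots_def
    by (simp add: complex_eq_iff Re_sum Im_sum sum_negf)
qed

lemma c1_real_eigenvalue_schur_eigenvalue:
  assumes k: "0 < k" "k < n"
  shows "c1_real_eigenvalue k n (schur_eigenvalue k n)"
proof (rule c1_real_eigenvalue_if_complex_eigenvector)
  show "replicate k 0 \<in> box_parts k n" by (rule replicate_0_in_box_parts)
  show "schur_alternant k (balanced_roots k n) (replicate k 0) \<noteq> 0"
    unfolding schur_alternant_replicate_0
    by (rule det_vandermonde_nonzero[OF inj_on_balanced_roots]) (use k in simp)
  fix mu assume "mu \<in> box_parts k n"
  from c1_hat_schur_alternant[OF this k balanced_roots_power] k
  show "(\<Sum>l\<in>box_parts k n. of_real (c1_coeff k n mu l) * schur_alternant k (balanced_roots k n) l)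
      = complex_of_real (schur_eigenvalue k n) * schur_alternant k (balanced_roots k n) mu"
    by (simp add: schur_eigenvalue_def sum_inverse_balanced_roots)
qed

section \<open>Estimating the eigenvalue\<close>

lemma cos_ge_1_minus_square_half: "1 - x^2 / 2 \<le> cos (x::real)"
proof -
  have "\<bar>sin (x/2)\<bar> \<le> \<bar>x/2\<bar>" by (rule abs_sin_x_le_abs_x)
  then have "sin (x/2) ^ 2 \<le> (x/2)^2" by (metis abs_ge_zero power2_abs power_mono)
  then show ?thesis using cos_double_sin[of "x/2"] by (simp add: power_divide)
qed

lemma sum_square_arith_progression:
  "(\<Sum>a<m. (c - 2 * real a)^2)
     = real m * c^2 - 2 * c * real m * (real m - 1) + 2 * (real m - 1) * real m * (2 * real m - 1) / 3"
  by (induction m) (simp_all add: power2_eq_square field_simps)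

lemma sin_mult_sum_cos: "sin t * (\<Sum>a<k. cos ((real k - 1 - 2 * real a) * t)) = sin (real k * t)"
proof -
  define g where "g a = sin ((real k - 2 * real a) * t)" for a
  have "2 * sin t * cos ((real k - 1 - 2 * real a) * t) = g a - g (Suc a)" for a
  proof -
    have "2 * sin t * cos ((real k - 1 - 2 * real a) * t)
        = sin (t + (real k - 1 - 2 * real a) * t) + sin (t - (real k - 1 - 2 * real a) * t)"
      by (simp add: sin_add sin_diff)
    also have "t + (real k - 1 - 2 * real a) * t = (real k - 2 * real a) * t"
      by (simp add: algebra_simps)
    also have "t - (real k - 1 - 2 * real a) * t = - ((real k - 2 * real (Suc a)) * t)"
      by (simp add: algebra_simps)
    finally show ?thesis unfolding g_def by simp
  qed
  then have "2 * (sin t * (\<Sum>a<k. cos ((real k - 1 - 2 * real a) * t))) = (\<Sum>a<k. g a - g (Suc a))"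
    by (simp add: sum_distrib_left mult.assoc)
  also have "\<dots> = g 0 - g k" by (rule sum_lessThan_telescope')
  also have "\<dots> = 2 * sin (real k * t)"
    unfolding g_def by (simp add: algebra_simps)
  finally show ?thesis by simp
qed

lemma schur_eigenvalue_complement:
  assumes "k \<le> n" "2 \<le> n"
  shows "schur_eigenvalue (n - k) n = schur_eigenvalue k n"
proof -
  have sin_pos: "sin (pi / real n) > 0" using assms by (intro sin_gt_zero) (auto simp: field_simps)
  have closed: "schur_eigenvalue j n = real n * sin (real j * (pi / real n)) / sin (pi / real n)" for j
    using sin_mult_sum_cos[of "pi / real n" j] sin_pos
    unfolding schur_eigenvalue_def theta_def by (simp add: field_simps)
  have "real (n - k) * (pi / real n) = pi - real k * (pi / real n)"
    using assms by (simp add: of_nat_diff field_simps)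
  then show ?thesis unfolding closed by simp
qed

lemma schur_eigenvalue_lower_bound:
  assumes m: "1 \<le> m" "2 * m \<le> n"
  shows "real (m * (n - m)) + 1 + (real m^2 - 1) * (1 - pi^2 * real m / (6 * real n))
           \<le> schur_eigenvalue m n"
proof -
  define t where "t = pi / real n"
  define S where "S = (\<Sum>a<m. (real m - 1 - 2 * real a)^2)"
  have n: "real n > 0" using m by simp
  have "real m - t^2 / 2 * S = (\<Sum>a<m. 1 - ((real m - 1 - 2 * real a) * t)^2 / 2)"
    unfolding S_def by (simp add: sum_subtractf sum_distrib_left power_mult_distrib mult.commute)
  also have "\<dots> \<le> (\<Sum>a<m. cos ((real m - 1 - 2 * real a) * t))"
    by (intro sum_mono cos_ge_1_minus_square_half)
  finally have "real n * (real m - t^2 / 2 * S) \<le> schur_eigenvalue m n"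
    unfolding schur_eigenvalue_def theta_def t_def using n by simp
  moreover have "S = real m * (real m^2 - 1) / 3"
    unfolding S_def sum_square_arith_progression by (simp add: power2_eq_square field_simps)
  moreover have "real n * (real m - t^2 / 2 * (real m * (real m^2 - 1) / 3))
      = real (m * (n - m)) + 1 + (real m^2 - 1) * (1 - pi^2 * real m / (6 * real n))"
    using n m unfolding t_def by (simp add: of_nat_diff power2_eq_square field_simps)
  ultimately show ?thesis by simp
qed

lemma schur_eigenvalue_ge:
  assumes k: "0 < k" "k < n"
  shows "real (k * (n - k)) + 1 \<le> schur_eigenvalue k n"
    and "2 \<le> k \<Longrightarrow> k + 2 \<le> n \<Longrightarrow> real (k * (n - k)) + 1 < schur_eigenvalue k n"
proof -
  define m where "m = min k (n - k)"
  have m: "1 \<le> m" "2 * m \<le> n" and same: "m * (n - m) = k * (n - k)"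
    using k unfolding m_def by (auto simp: min_def mult.commute)
  have eigen: "schur_eigenvalue m n = schur_eigenvalue k n"
    using k schur_eigenvalue_complement[of k n] unfolding m_def by (auto simp: min_def)
  have "pi * pi < 3.2 * 3.2" using pi_approx(2) by (intro mult_strict_mono) auto
  then have "pi^2 * real m < 3.2 * 3.2 * real m" using m by (simp add: power2_eq_square)
  then have "pi^2 * real m < 6 * real n" using m by linarith
  moreover have "0 < real n" using m by simp
  ultimately have ratio: "0 < 1 - pi^2 * real m / (6 * real n)" by (simp add: field_simps)
  have gap: "real (k * (n - k)) + 1 + (real m^2 - 1) * (1 - pi^2 * real m / (6 * real n))
      \<le> schur_eigenvalue k n"
    using schur_eigenvalue_lower_bound[OF m] unfolding same eigen .
  have "1 \<le> real m^2" using m by simp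
  with ratio have "0 \<le> (real m^2 - 1) * (1 - pi^2 * real m / (6 * real n))" by simp
  with gap show "real (k * (n - k)) + 1 \<le> schur_eigenvalue k n" by linarith
  assume "2 \<le> k" "k + 2 \<le> n"
  then have "4 \<le> real m^2" using power_mono[of 2 "real m" 2] unfolding m_def by simp
  with ratio have "0 < (real m^2 - 1) * (1 - pi^2 * real m / (6 * real n))" by simp
  with gap show "real (k * (n - k)) + 1 < schur_eigenvalue k n" by linarith
qed

section \<open>The largest eigenvalue\<close>

definition c1_matrix :: "nat \<Rightarrow> nat \<Rightarrow> nat list list \<Rightarrow> real mat" where
  "c1_matrix k n es = mat (length es) (length es) (\<lambda>(i, j). c1_coeff k n (es!i) (es!j))"

lemma c1_real_eigenvalue_in_spectrum:
  assumes es: "distinct es" "set es = box_parts k n" and ev: "c1_real_eigenvalue k n d"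
  shows "d \<in> spectrum (c1_matrix k n es)"
proof -
  define N where "N = length es"
  let ?A = "c1_matrix k n es"
  obtain v where nz: "\<exists>mu\<in>box_parts k n. v mu \<noteq> 0"
    and eigen: "\<forall>mu\<in>box_parts k n. c1_hat k n v mu = d * v mu"
    using ev unfolding c1_real_eigenvalue_def by blast
  define x where "x = vec N (\<lambda>i. v (es!i))"
  have x: "x \<in> carrier_vec N" unfolding x_def by simp
  have "x \<noteq> 0\<^sub>v N"
  proof
    assume x0: "x = 0\<^sub>v N"
    obtain mu where mu: "mu \<in> box_parts k n" "v mu \<noteq> 0" using nz by blast
    then obtain i where i: "i < N" "es!i = mu"
      using es(2) unfolding N_def by (metis in_set_conv_nth)
    have "x $ i = v mu" unfolding x_def using i by simp
    moreover have "x $ i = 0" using x0 i by simp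
    ultimately show False using mu by simp
  qed
  moreover have "?A *\<^sub>v x = d \<cdot>\<^sub>v x"
  proof (rule eq_vecI)
    fix i assume "i < dim_vec (d \<cdot>\<^sub>v x)"
    then have i: "i < N" using x by simp
    then have esi: "es!i \<in> box_parts k n" using es(2) unfolding N_def by (metis nth_mem)
    have "(?A *\<^sub>v x) $ i = sum_list (map (\<lambda>l. c1_coeff k n (es!i) l * v l) es)"
      using i unfolding x_def c1_matrix_def N_def by (simp add: scalar_prod_def sum_list_sum_nth)
    also have "\<dots> = c1_hat k n v (es!i)"
      unfolding c1_hat_def sum_list_distinct_conv_sum_set[OF es(1)] es(2) ..
    also have "\<dots> = (d \<cdot>\<^sub>v x) $ i" using eigen esi i unfolding x_def by simp
    finally show "(?A *\<^sub>v x) $ i = (d \<cdot>\<^sub>v x) $ i" .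
  qed (simp add: c1_matrix_def x_def N_def)
  moreover have "dim_row ?A = N" unfolding c1_matrix_def N_def by simp
  ultimately have "eigenvector ?A x d" unfolding eigenvector_def using x by simp
  then show ?thesis unfolding spectrum_def eigenvalue_def by blast
qed

lemma finite_c1_real_eigenvalues: "finite {d. c1_real_eigenvalue k n d}"
proof -
  obtain es where es: "distinct es" "set es = box_parts k n"
    using finite_distinct_list[OF finite_box_parts] by blast
  have "c1_matrix k n es \<in> carrier_mat (length es) (length es)" unfolding c1_matrix_def by simp
  from card_finite_spectrum(1)[OF this] show ?thesis
    by (rule finite_subset[rotated]) (use c1_real_eigenvalue_in_spectrum[OF es] in blast)
qed

lemma delta0_is_max:
  assumes "0 < k" "k < n"
  shows "c1_real_eigenvalue k n (delta0 k n)" and "c1_real_eigenvalue k n d \<Longrightarrow> d \<le> delta0 k n"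
proof -
  let ?E = "{d. c1_real_eigenvalue k n d}"
  have "?E \<noteq> {}" using c1_real_eigenvalue_schur_eigenvalue[OF assms] by blast
  with finite_c1_real_eigenvalues have "delta0 k n \<in> ?E" unfolding delta0_def by (rule Max_in)
  then show "c1_real_eigenvalue k n (delta0 k n)" by simp
  show "c1_real_eigenvalue k n d \<Longrightarrow> d \<le> delta0 k n"
    unfolding delta0_def using finite_c1_real_eigenvalues by (rule Max_ge) simp
qed

definition predecessor_count :: "nat \<Rightarrow> nat \<Rightarrow> nat list \<Rightarrow> nat" where
  "predecessor_count k n mu = card (removable_rows k mu) + (if is_star k n mu then 1 else 0)"

lemma abs_c1_real_eigenvalue_le:
  assumes k: "0 < k" "k < n" and ev: "c1_real_eigenvalue k n d"
  shows "\<exists>mu\<in>box_parts k n. \<bar>d\<bar> \<le> real n * real (predecessor_count k n mu)"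
proof -
  let ?S = "box_parts k n"
  obtain v where nz: "\<exists>mu\<in>?S. v mu \<noteq> 0" and eigen: "\<forall>mu\<in>?S. c1_hat k n v mu = d * v mu"
    using ev unfolding c1_real_eigenvalue_def by blast
  define M where "M = Max ((\<lambda>l. \<bar>v l\<bar>) ` ?S)"
  have fin: "finite ((\<lambda>l. \<bar>v l\<bar>) ` ?S)" using finite_box_parts by simp
  have "M \<in> (\<lambda>l. \<bar>v l\<bar>) ` ?S" unfolding M_def using fin nz by (intro Max_in) auto
  then obtain mu where mu: "mu \<in> ?S" and M: "\<bar>v mu\<bar> = M" by blast
  have max: "\<bar>v l\<bar> \<le> \<bar>v mu\<bar>" if "l \<in> ?S" for l
    unfolding M M_def using fin that by (intro Max_ge) auto
  obtain mu0 where "mu0 \<in> ?S" "v mu0 \<noteq> 0" using nz by blast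
  with max have pos: "0 < \<bar>v mu\<bar>" by fastforce
  define X where "X = (\<Sum>j\<in>removable_rows k mu. v (remove_box mu j))
                      + (if is_star k n mu then v (unstar k n mu) else 0)"
  have "d * v mu = real n * X"
    using eigen mu c1_hat_row[OF mu k, of v] unfolding c1_hat_def X_def by simp
  then have "\<bar>d\<bar> * \<bar>v mu\<bar> = \<bar>real n * X\<bar>" by (simp flip: abs_mult)
  also have "\<dots> = real n * \<bar>X\<bar>" by (simp add: abs_mult)
  also have "\<bar>X\<bar> \<le> real (predecessor_count k n mu) * \<bar>v mu\<bar>"
  proof -
    have "\<bar>X\<bar> \<le> (\<Sum>j\<in>removable_rows k mu. \<bar>v mu\<bar>) + (if is_star k n mu then \<bar>v mu\<bar> else 0)"
      unfolding X_def
      using max remove_box_in_box_parts[OF mu] unstar_in_box_parts(1)[OF mu _ k]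
      by (intro order.trans[OF abs_triangle_ineq] add_mono order.trans[OF sum_abs] sum_mono) auto
    then show ?thesis unfolding predecessor_count_def by (cases "is_star k n mu") (simp_all add: algebra_simps)
  qed
  finally have "\<bar>d\<bar> * \<bar>v mu\<bar> \<le> real n * real (predecessor_count k n mu) * \<bar>v mu\<bar>"
    by (simp add: mult.assoc mult_left_mono)
  with pos mu show ?thesis by auto
qed

lemma projective_removable_rows_unique:
  assumes mu: "mu \<in> box_parts k n" and proj: "k = 1 \<or> k = n - 1"
    and ab: "a \<in> removable_rows k mu" "b \<in> removable_rows k mu"
  shows "a = b"
proof -
  have no_two: False if "a \<in> removable_rows k mu" "b \<in> removable_rows k mu" "a < b" for a b
  proof -
    have a: "0 < mu!a" "Suc a < k \<Longrightarrow> mu!(Suc a) < mu!a" and b: "0 < mu!b" "b < k"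
      using that(1,2) by (simp_all add: removable_rows_def)
    with that(3) have "Suc a < k" "k \<noteq> 1" by simp_all
    moreover have "mu!a \<le> n - k" using mu \<open>Suc a < k\<close> unfolding box_parts_iff by simp
    ultimately have "mu!(Suc a) = 0" using a proj by simp
    moreover have "mu!b \<le> mu!(Suc a)"
      using box_parts_nth_antimono[OF mu, of "Suc a" b] that(3) b(2) by simp
    ultimately show False using b(1) by simp
  qed
  show ?thesis
    using no_two[of a b] no_two[of b a] ab by (cases a b rule: linorder_cases) auto
qed

lemma projective_predecessor_count:
  assumes mu: "mu \<in> box_parts k n" and k: "0 < k" "k < n" and proj: "k = 1 \<or> k = n - 1"
  shows "predecessor_count k n mu \<le> 1"
proof -
  let ?R = "removable_rows k mu"
  have not_star: "\<not> is_star k n mu" if "j \<in> ?R" for j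
  proof
    assume star: "is_star k n mu"
    show False
    proof (cases "k = 1")
      case True with that star show False by (auto simp: removable_rows_def is_star_def)
    next
      case False
      with star proj k have "mu!0 = 0" unfolding is_star_def by simp
      moreover have "mu!j \<le> mu!0" using box_parts_nth_antimono[OF mu, of 0 j] that
        by (simp add: removable_rows_def)
      ultimately show False using that by (simp add: removable_rows_def)
    qed
  qed
  have "finite ?R" unfolding removable_rows_def by simp
  then have "card ?R \<le> 1"
    using projective_removable_rows_unique[OF mu proj] by (simp add: card_le_Suc0_iff_eq)
  moreover have "?R = {} \<or> \<not> is_star k n mu" using not_star by blast
  ultimately show ?thesis unfolding predecessor_count_def by auto
qed

theorem theorem1p3:
  fixes k n :: nat
  assumes "1 \<le> k" and "k \<le> n - 1"
  shows "delta0 k n \<ge> real (k * (n - k)) + 1 \<and>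
         (delta0 k n = real (k * (n - k)) + 1 \<longleftrightarrow> k = 1 \<or> k = n - 1)"
proof -
  have k: "0 < k" "k < n" using assms by auto
  have schur: "schur_eigenvalue k n \<le> delta0 k n"
    using delta0_is_max(2)[OF k c1_real_eigenvalue_schur_eigenvalue[OF k]] .
  have lower: "real (k * (n - k)) + 1 \<le> delta0 k n"
    using schur_eigenvalue_ge(1)[OF k] schur by linarith
  have upper: "delta0 k n \<le> real (k * (n - k)) + 1" if proj: "k = 1 \<or> k = n - 1"
  proof -
    obtain mu where mu: "mu \<in> box_parts k n"
      and bound: "\<bar>delta0 k n\<bar> \<le> real n * real (predecessor_count k n mu)"
      using abs_c1_real_eigenvalue_le[OF k delta0_is_max(1)[OF k]] by blast
    note bound
    also have "\<dots> \<le> real n * 1"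
      using projective_predecessor_count[OF mu k proj] by (intro mult_left_mono) simp_all
    also have "\<dots> = real (k * (n - k)) + 1" using proj k by (auto simp: of_nat_diff)
    finally show ?thesis by linarith
  qed
  show ?thesis
  proof (intro conjI iffI lower)
    assume eq: "delta0 k n = real (k * (n - k)) + 1"
    show "k = 1 \<or> k = n - 1"
    proof (rule ccontr)
      assume "\<not> (k = 1 \<or> k = n - 1)"
      then have "2 \<le> k" "k + 2 \<le> n" using k by auto
      with schur_eigenvalue_ge(2)[OF k] schur eq show False by linarith
    qed
  qed (use upper lower in \<open>simp add: antisym\<close>)
qed

end
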